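(* For every integer $n \ge 8$, $$M(n) \ge \tfrac12\, c^n, \qquad\text{where } c = 2132^{1/10} = 2.152\ldots$$
   Context: For a positive integer $n$, $M(n)$ denotes the number of permutations $(t_1,\dots,t_n)$ of $\{1,2,\ldots,n\}$ that do not contain a 3-term arithmetic progression as a subsequence. Here a sequence contains a 3-term arithmetic progression (3AP) as a subsequence if there are indices $i<j<k$ with $t_j - t_i = t_k - t_j \neq 0$; the common difference may be positive or negative. For example, $M(4)=10$. *)

theory Defs
  imports Complex_Main
begin

definition has_3AP :: "nat list \<Rightarrow> bool" where
  "has_3AP t \<longleftrightarrow> (\<exists>i j k. i < j \<and> j < k \<and> k < length t \<and>
      int (t ! j) - int (t ! i) = int (t ! k) - int (t ! j) \<and>
      int (t ! j) - int (t ! i) \<noteq> 0)"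

definition perms_of :: "nat \<Rightarrow> nat list set" where
  "perms_of n = {t. distinct t \<and> set t = {1..n}}"

definition M :: "nat \<Rightarrow> nat" where
  "M n = card {t \<in> perms_of n. \<not> has_3AP t}"

end

theory Submission
  imports Defs
begin

text \<open>
  If \<open>s\<close> and \<open>u\<close> are 3AP-free permutations of \<open>{1..\<lfloor>n/2\<rfloor>}\<close> and \<open>{1..\<lceil>n/2\<rceil>}\<close>, then the
  even block \<open>2s\<close> followed by the odd block \<open>2u - 1\<close>, and the two blocks in the other order,
  are 3AP-free permutations of \<open>{1..n}\<close>: a progression cannot have its first and last terms of
  different parity. Exchanging the two entries \<open>x, y\<close> at the junction of the blocks keeps the
  list 3AP-free when neither \<open>2x - y\<close> nor \<open>2y - x\<close> lies in \<open>{1..n}\<close>. These four arrangements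
  are told apart by the parity pattern of a list, and avoiders following none of them may be
  added; this is the counting inequality \<open>M_lower_bound\<close>, and with \<open>A\<close>, \<open>B\<close> all avoiders it
  gives \<open>M n \<ge> 2 M \<lfloor>n/2\<rfloor> M \<lceil>n/2\<rceil>\<close>.

  An executable 3AP-freeness test certifies explicit lists of avoiders of lengths 4 to 7, 9
  and 10; evaluating the counting inequality on them gives \<open>(2 M n)^10 \<ge> 2132^n\<close> for
  \<open>8 \<le> n \<le> 15\<close>. Strong induction through the halving inequality finishes the proof.
\<close>

definition avoiders :: "nat \<Rightarrow> nat list set" where
  "avoiders n = {t \<in> perms_of n. \<not> has_3AP t}"

lemma M_eq_card_avoiders: "M n = card (avoiders n)"
  by (simp add: M_def avoiders_def)

lemma length_perms_of: "t \<in> perms_of n \<Longrightarrow> length t = n"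
  unfolding perms_of_def using distinct_card by fastforce

lemma avoidersD:
  assumes "t \<in> avoiders n"
  shows "distinct t" "set t = {1..n}" "length t = n" "\<not> has_3AP t"
  using assms length_perms_of unfolding avoiders_def perms_of_def by auto

lemma finite_avoiders: "finite (avoiders n)"
proof -
  have "avoiders n \<subseteq> {xs. set xs \<subseteq> {1..n} \<and> length xs = n}"
    using avoidersD by auto
  thus ?thesis using finite_lists_length_eq[of "{1..n}" n] finite_subset by auto
qed

lemma has_3AP_affine:
  assumes "a \<noteq> 0" and f: "\<forall>x\<in>set s. int (f x) = a * int x + b" and "has_3AP (map f s)"
  shows "has_3AP s"
proof -
  obtain i j k where ijk: "i < j" "j < k" "k < length s"
    "int (map f s ! j) - int (map f s ! i) = int (map f s ! k) - int (map f s ! j)"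
    "int (map f s ! j) - int (map f s ! i) \<noteq> 0"
    using assms(3) unfolding has_3AP_def by auto
  have "\<And>m. m < length s \<Longrightarrow> int (map f s ! m) = a * int (s ! m) + b"
    using f by simp
  hence "a * (int (s!j) - int (s!i)) = a * (int (s!k) - int (s!j))"
    and "a * (int (s!j) - int (s!i)) \<noteq> 0"
    using ijk by (simp_all add: algebra_simps)
  hence "int (s!j) - int (s!i) = int (s!k) - int (s!j)" "int (s!j) - int (s!i) \<noteq> 0"
    using \<open>a \<noteq> 0\<close> by simp_all
  thus ?thesis unfolding has_3AP_def using ijk(1-3) by blast
qed

text \<open>A 3AP in a concatenation of an all-even and an all-odd block (in either order) lies in
  one block, since its outer terms have the same parity.\<close>
lemma has_3AP_parity_blocks:
  assumes px: "\<forall>x\<in>set xs. even x = p" and py: "\<forall>y\<in>set ys. even y = (\<not> p)"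
    and h: "has_3AP (xs @ ys)"
  shows "has_3AP xs \<or> has_3AP ys"
proof -
  let ?t = "xs @ ys" and ?l = "length xs"
  obtain i j k where ijk: "i < j" "j < k" "k < length ?t"
    "int (?t ! j) - int (?t ! i) = int (?t ! k) - int (?t ! j)"
    "int (?t ! j) - int (?t ! i) \<noteq> 0"
    using h unfolding has_3AP_def by auto
  consider "k < ?l" | "?l \<le> i" | "i < ?l" "?l \<le> k" by linarith
  thus ?thesis
  proof cases
    case 1
    hence "has_3AP xs" unfolding has_3AP_def using ijk
      by (intro exI[of _ i] exI[of _ j] exI[of _ k]) (auto simp: nth_append)
    thus ?thesis ..
  next
    case 2
    hence "has_3AP ys" unfolding has_3AP_def using ijk
      by (intro exI[of _ "i - ?l"] exI[of _ "j - ?l"] exI[of _ "k - ?l"]) (auto simp: nth_append)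
    thus ?thesis ..
  next
    case 3
    have "even (?t ! i) = p" using 3 px by (simp add: nth_append)
    moreover have "even (?t ! k) = (\<not> p)" using 3 ijk py by (simp add: nth_append)
    moreover have "?t ! i + ?t ! k = 2 * ?t ! j" using ijk(4) by linarith
    ultimately show ?thesis by (metis dvd_triv_left even_add)
  qed
qed

text \<open>Exchanging adjacent entries \<open>x, y\<close> of an avoider of \<open>{1..n}\<close> can only create a
  progression \<open>y, x, 2x - y\<close> or \<open>2y - x, y, x\<close>; it is safe when neither completion is in range.\<close>
definition swap_safe :: "nat \<Rightarrow> nat \<Rightarrow> nat \<Rightarrow> bool" where
  "swap_safe n x y \<longleftrightarrow> \<not> (1 \<le> 2 * int x - int y \<and> 2 * int x - int y \<le> int n) \<and>
                       \<not> (1 \<le> 2 * int y - int x \<and> 2 * int y - int x \<le> int n)"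

lemma nth_adjacent_swap:
  assumes "m < length xs + 2 + length ys"
  shows "(xs @ y # x # ys) ! m = (xs @ x # y # ys) !
           (if m = length xs then Suc (length xs) else if m = Suc (length xs) then length xs else m)"
  using assms by (auto simp: nth_append nth_Cons split: nat.splits)

lemma has_3AP_adjacent_swap:
  assumes free: "\<not> has_3AP (xs @ x # y # ys)"
    and range: "set (xs @ x # y # ys) \<subseteq> {1..n}"
    and safe: "swap_safe n x y"
  shows "\<not> has_3AP (xs @ y # x # ys)"
proof
  let ?t = "xs @ x # y # ys" and ?s = "xs @ y # x # ys" and ?l = "length xs"
  define g where "g m = (if m = ?l then Suc ?l else if m = Suc ?l then ?l else m)" for m
  assume "has_3AP ?s"
  then obtain i j k where ijk: "i < j" "j < k" "k < length ?s"
    "int (?s ! j) - int (?s ! i) = int (?s ! k) - int (?s ! j)"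
    "int (?s ! j) - int (?s ! i) \<noteq> 0"
    unfolding has_3AP_def by auto
  have s_nth: "\<And>m. m < length ?s \<Longrightarrow> ?s ! m = ?t ! g m"
    using nth_adjacent_swap[of _ xs ys y x] unfolding g_def by (simp only: length_append list.size)
  have in_range: "\<And>m. m < length ?t \<Longrightarrow> 1 \<le> ?t ! m \<and> ?t ! m \<le> n"
    using range nth_mem by (metis atLeastAtMost_iff subsetD)
  have "g i < g j \<and> g j < g k" if "\<not> (i = ?l \<and> j = Suc ?l)" "\<not> (j = ?l \<and> k = Suc ?l)"
    using that ijk(1,2) unfolding g_def by auto
  then consider "i = ?l" "j = Suc ?l" | "j = ?l" "k = Suc ?l" | "g i < g j" "g j < g k"
    by blast
  thus False
  proof cases
    case 1
    \<comment> \<open>the swapped pair starts the progression; its third term would be \<open>2x - y\<close>\<close>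
    have "?s ! k = ?t ! k" "1 \<le> ?t ! k \<and> ?t ! k \<le> n"
      using 1 ijk s_nth in_range unfolding g_def by auto
    moreover have "?s ! i = y" "?s ! j = x" using 1 by (auto simp: nth_append)
    ultimately show False using safe ijk(4) unfolding swap_safe_def by auto
  next
    case 2
    \<comment> \<open>the swapped pair ends the progression; its first term would be \<open>2y - x\<close>\<close>
    have "?s ! i = ?t ! i" "1 \<le> ?t ! i \<and> ?t ! i \<le> n"
      using 2 ijk s_nth in_range unfolding g_def by auto
    moreover have "?s ! j = y" "?s ! k = x" using 2 by (auto simp: nth_append)
    ultimately show False using safe ijk(4) unfolding swap_safe_def by auto
  next
    case 3
    \<comment> \<open>otherwise the progression is already present, in the same order, before the swap\<close>
    have "g k < length ?t" using ijk unfolding g_def by auto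
    hence "has_3AP ?t" unfolding has_3AP_def using 3 ijk s_nth
      by (intro exI[of _ "g i"] exI[of _ "g j"] exI[of _ "g k"]) auto
    thus False using free by simp
  qed
qed

definition evens :: "nat list \<Rightarrow> nat list" where
  "evens s = map (\<lambda>x. 2 * x) s"

definition odds :: "nat list \<Rightarrow> nat list" where
  "odds u = map (\<lambda>x. 2 * x - 1) u"

lemma inj_evens: "inj evens"
  unfolding evens_def by (rule inj_mapI) (auto simp: inj_def)

lemma inj_odds: "inj odds"
  unfolding odds_def by (rule inj_mapI) (auto simp: inj_def)

lemma evens_even: "\<forall>x\<in>set (evens s). even x"
  unfolding evens_def by auto

lemma odds_odd: "\<forall>x\<in>set u. 1 \<le> x \<Longrightarrow> \<forall>x\<in>set (odds u). odd x"
  unfolding odds_def by auto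

lemma evens_odds_cover:
  "(\<lambda>x. 2 * x) ` {1..n div 2} \<union> (\<lambda>x. 2 * x - 1) ` {1..n - n div 2} = {(1::nat)..n}"
proof (intro equalityI subsetI)
  fix y assume "y \<in> (\<lambda>x. 2 * x) ` {1..n div 2} \<union> (\<lambda>x. 2 * x - 1) ` {1..n - n div 2}"
  thus "y \<in> {1..n}" by auto
next
  fix y :: nat assume y: "y \<in> {1..n}"
  show "y \<in> (\<lambda>x. 2 * x) ` {1..n div 2} \<union> (\<lambda>x. 2 * x - 1) ` {1..n - n div 2}"
  proof (cases "even y")
    case True
    hence "y = 2 * (y div 2)" "y div 2 \<in> {1..n div 2}" using y by auto
    thus ?thesis by blast
  next
    case False
    hence "y = 2 * ((y + 1) div 2) - 1" "(y + 1) div 2 \<in> {1..n - n div 2}" using y by auto presburger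
    thus ?thesis by blast
  qed
qed

lemma avoiders_concat_evens_odds:
  assumes s: "s \<in> avoiders (n div 2)" and u: "u \<in> avoiders (n - n div 2)"
  shows "evens s @ odds u \<in> avoiders n" "odds u @ evens s \<in> avoiders n"
proof -
  have u_pos: "\<forall>x\<in>set u. 1 \<le> x" using avoidersD(2)[OF u] by auto
  have "distinct (evens s)" "distinct (odds u)"
    using avoidersD(1)[OF s] avoidersD(1)[OF u] inj_evens inj_odds unfolding evens_def odds_def
    by (auto simp: distinct_map inj_on_def)
  moreover have "set (evens s) \<inter> set (odds u) = {}"
    using evens_even odds_odd[OF u_pos] by blast
  moreover have "set (evens s) \<union> set (odds u) = {1..n}"
    using avoidersD(2)[OF s] avoidersD(2)[OF u] evens_odds_cover[of n]
    unfolding evens_def odds_def by simp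
  moreover have "\<not> has_3AP (evens s)"
    using has_3AP_affine[of 2 s "\<lambda>x. 2 * x" 0] avoidersD(4)[OF s] unfolding evens_def by auto
  moreover have "\<not> has_3AP (odds u)"
    using has_3AP_affine[of 2 u "\<lambda>x. 2 * x - 1" "-1"] avoidersD(4)[OF u] u_pos
    unfolding odds_def by force
  ultimately show "evens s @ odds u \<in> avoiders n" "odds u @ evens s \<in> avoiders n"
    using has_3AP_parity_blocks[of "evens s" True "odds u"]
      has_3AP_parity_blocks[of "odds u" False "evens s"] evens_even odds_odd[OF u_pos]
    unfolding avoiders_def perms_of_def by auto
qed

definition boundary_swap :: "'a list \<Rightarrow> 'a list \<Rightarrow> 'a list" where
  "boundary_swap xs ys = butlast xs @ hd ys # last xs # tl ys"

lemma append_at_boundary: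
  "xs \<noteq> [] \<Longrightarrow> ys \<noteq> [] \<Longrightarrow> xs @ ys = butlast xs @ last xs # hd ys # tl ys"
  by simp

lemma boundary_swap_avoiders:
  assumes "xs \<noteq> []" "ys \<noteq> []" and t: "xs @ ys \<in> avoiders n"
    and safe: "swap_safe n (last xs) (hd ys)"
  shows "boundary_swap xs ys \<in> avoiders n"
proof -
  note split = append_at_boundary[OF assms(1,2)]
  have "set (butlast xs @ last xs # hd ys # tl ys) \<subseteq> {1..n}"
    using avoidersD(2)[OF t] unfolding split by simp
  hence "\<not> has_3AP (boundary_swap xs ys)"
    using has_3AP_adjacent_swap[OF _ _ safe] avoidersD(4)[OF t]
    unfolding boundary_swap_def split by blast
  moreover have "boundary_swap xs ys \<in> perms_of n"
    using t unfolding avoiders_def perms_of_def boundary_swap_def split by (auto simp: insert_commute)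
  ultimately show ?thesis unfolding avoiders_def by simp
qed

lemma filter_boundary_swap:
  assumes "xs \<noteq> []" "ys \<noteq> []" "\<forall>x\<in>set xs. P x" "\<forall>y\<in>set ys. \<not> P y"
  shows "filter P (boundary_swap xs ys) = xs" "filter (\<lambda>x. \<not> P x) (boundary_swap xs ys) = ys"
proof -
  have parts: "\<forall>x\<in>set (butlast xs). P x" "P (last xs)" "\<not> P (hd ys)" "\<forall>y\<in>set (tl ys). \<not> P y"
    using assms by (auto dest: in_set_butlastD list.set_sel)
  have xs: "xs = butlast xs @ [last xs]" and ys: "ys = hd ys # tl ys" using assms(1,2) by auto
  show "filter P (boundary_swap xs ys) = xs"
    using parts unfolding boundary_swap_def by (subst (3) xs) (simp add: filter_True filter_False)
  show "filter (\<lambda>x. \<not> P x) (boundary_swap xs ys) = ys"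
    using parts unfolding boundary_swap_def by (subst (3) ys) (simp add: filter_True filter_False)
qed

lemma boundary_swap_neq_append:
  "xs \<noteq> [] \<Longrightarrow> ys \<noteq> [] \<Longrightarrow> last xs \<noteq> hd ys \<Longrightarrow> boundary_swap xs ys \<noteq> xs @ ys"
  unfolding boundary_swap_def by (simp add: append_at_boundary)

lemma hd_boundary_swap: "2 \<le> length xs \<Longrightarrow> hd (boundary_swap xs ys) = hd xs"
  unfolding boundary_swap_def by (cases xs rule: rev_cases) (auto simp: hd_append)

definition arrange :: "nat \<Rightarrow> 'a list \<Rightarrow> 'a list \<Rightarrow> 'a list" where
  "arrange i Ev Od = (if i = 1 then Ev @ Od else if i = 2 then Od @ Ev
     else if i = 3 then boundary_swap Ev Od else boundary_swap Od Ev)"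

definition parity_pattern :: "nat list \<Rightarrow> nat" where
  "parity_pattern t = (let Ev = filter even t; Od = filter odd t in
     if t = arrange 1 Ev Od then 1 else if t = arrange 2 Ev Od then 2
     else if t = arrange 3 Ev Od then 3 else if t = arrange 4 Ev Od then 4 else 0)"

lemma parity_pattern_range: "parity_pattern t \<in> {0..4}"
  unfolding parity_pattern_def Let_def by simp

lemma arrange_decode:
  assumes Ev: "\<forall>x\<in>set Ev. even x" and Od: "\<forall>x\<in>set Od. odd x"
    and len: "2 \<le> length Ev" "2 \<le> length Od" and i: "i \<in> {1..4}"
  shows "filter even (arrange i Ev Od) = Ev" "filter odd (arrange i Ev Od) = Od"
    "parity_pattern (arrange i Ev Od) = i"
proof -
  have ne: "Ev \<noteq> []" "Od \<noteq> []" using len by auto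
  have filters: "filter even (arrange j Ev Od) = Ev \<and> filter odd (arrange j Ev Od) = Od" for j
    using filter_boundary_swap[OF ne, of even] filter_boundary_swap[OF ne(2,1), of odd] Ev Od
    unfolding arrange_def by (auto simp: filter_True filter_False)
  thus "filter even (arrange i Ev Od) = Ev" "filter odd (arrange i Ev Od) = Od" by auto
  have parity: "even (hd Ev)" "odd (hd Od)" "last Ev \<noteq> hd Od" "last Od \<noteq> hd Ev"
    using Ev Od ne by (metis last_in_set list.set_sel(1))+
  have heads: "hd (arrange 1 Ev Od) = hd Ev" "hd (arrange 2 Ev Od) = hd Od"
    "hd (arrange 3 Ev Od) = hd Ev" "hd (arrange 4 Ev Od) = hd Od"
    using ne len hd_boundary_swap unfolding arrange_def by auto
  have across: "arrange j Ev Od \<noteq> arrange k Ev Od" if "j \<in> {1, 3}" "k \<in> {2, 4}" for j k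
  proof -
    have "even (hd (arrange j Ev Od))" "odd (hd (arrange k Ev Od))" using that heads parity by auto
    thus ?thesis by metis
  qed
  have within: "arrange 1 Ev Od \<noteq> arrange 3 Ev Od" "arrange 2 Ev Od \<noteq> arrange 4 Ev Od"
    using boundary_swap_neq_append[OF ne parity(3)] boundary_swap_neq_append[OF ne(2,1) parity(4)]
    unfolding arrange_def by auto
  consider "i = 1" | "i = 2" | "i = 3" | "i = 4" using i by force
  thus "parity_pattern (arrange i Ev Od) = i"
    by cases (use filters across across[THEN not_sym] within in \<open>auto simp: parity_pattern_def Let_def\<close>)
qed

definition pattern_class :: "nat \<Rightarrow> nat \<Rightarrow> nat list set" where
  "pattern_class n i = {t \<in> avoiders n. parity_pattern t = i}"

lemma M_eq_sum_pattern_classes: "M n = (\<Sum>i\<in>{0..4}. card (pattern_class n i))"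
proof -
  have "parity_pattern ` avoiders n \<subseteq> {0..4}" using parity_pattern_range by auto
  from sum.group[OF finite_avoiders finite_atLeastAtMost this, of "\<lambda>_. 1::nat"]
  show ?thesis unfolding M_eq_card_avoiders pattern_class_def by simp
qed

lemma card_le_pattern_class:
  assumes i: "i \<in> {1..4}" and n: "4 \<le> n"
    and S: "S \<subseteq> avoiders (n div 2) \<times> avoiders (n - n div 2)"
    and arranged: "\<And>s u. (s, u) \<in> S \<Longrightarrow> arrange i (evens s) (odds u) \<in> avoiders n"
  shows "card S \<le> card (pattern_class n i)"
proof -
  define f where "f = (\<lambda>(s, u). arrange i (evens s) (odds u))"
  have decode: "filter even (f p) = evens (fst p) \<and> filter odd (f p) = odds (snd p)
      \<and> parity_pattern (f p) = i" if "p \<in> S" for p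
  proof -
    obtain s u where p: "p = (s, u)" and s: "s \<in> avoiders (n div 2)"
      and u: "u \<in> avoiders (n - n div 2)" using S \<open>p \<in> S\<close> by auto
    have "2 \<le> length (evens s)" "2 \<le> length (odds u)"
      using avoidersD(3)[OF s] avoidersD(3)[OF u] n unfolding evens_def odds_def by auto
    moreover have "\<forall>x\<in>set u. 1 \<le> x" using avoidersD(2)[OF u] by auto
    ultimately show ?thesis
      using arrange_decode[OF evens_even odds_odd _ _ i] unfolding p f_def by auto
  qed
  have "inj_on f S"
  proof (rule inj_onI)
    fix p q assume "p \<in> S" "q \<in> S" "f p = f q"
    hence "evens (fst p) = evens (fst q)" "odds (snd p) = odds (snd q)" using decode by metis+
    thus "p = q" using inj_evens inj_odds by (simp add: inj_eq prod_eq_iff)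
  qed
  moreover have "f ` S \<subseteq> pattern_class n i"
    using arranged decode unfolding f_def pattern_class_def by auto
  moreover have "finite (pattern_class n i)"
    using finite_avoiders unfolding pattern_class_def by simp
  ultimately show ?thesis by (rule card_inj_on_le)
qed

text \<open>The counting inequality behind all lower bounds: every pair of half-size avoiders gives two
  avoiders by concatenation, and a third (fourth) one by swapping across the junction when that
  swap is safe; avoiders of pattern 0 (set \<open>C\<close>) are counted on top of these.\<close>
lemma M_lower_bound:
  assumes n: "4 \<le> n" and A: "A \<subseteq> avoiders (n div 2)" and B: "B \<subseteq> avoiders (n - n div 2)"
    and C: "C \<subseteq> pattern_class n 0"
  shows "2 * card A * card B
    + card {p \<in> A \<times> B. swap_safe n (2 * last (fst p)) (2 * hd (snd p) - 1)}
    + card {p \<in> A \<times> B. swap_safe n (2 * last (snd p) - 1) (2 * hd (fst p))}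
    + card C \<le> M n"
proof -
  have AB: "A \<times> B \<subseteq> avoiders (n div 2) \<times> avoiders (n - n div 2)" using A B by auto
  have pair: "evens s \<noteq> [] \<and> odds u \<noteq> [] \<and> last (evens s) = 2 * last s \<and> hd (evens s) = 2 * hd s
      \<and> last (odds u) = 2 * last u - 1 \<and> hd (odds u) = 2 * hd u - 1
      \<and> evens s @ odds u \<in> avoiders n \<and> odds u @ evens s \<in> avoiders n"
    if "(s, u) \<in> A \<times> B" for s u
  proof -
    have s: "s \<in> avoiders (n div 2)" and u: "u \<in> avoiders (n - n div 2)" using that A B by auto
    have "s \<noteq> []" "u \<noteq> []" using avoidersD(3)[OF s] avoidersD(3)[OF u] n by auto
    thus ?thesis using avoiders_concat_evens_odds[OF s u]
      unfolding evens_def odds_def by (simp add: last_map hd_map)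
  qed
  have "card (A \<times> B) \<le> card (pattern_class n 1)" "card (A \<times> B) \<le> card (pattern_class n 2)"
    using pair by (auto intro!: card_le_pattern_class[OF _ n AB] simp: arrange_def)
  moreover have "card {p \<in> A \<times> B. swap_safe n (2 * last (fst p)) (2 * hd (snd p) - 1)}
      \<le> card (pattern_class n 3)"
    using AB pair by (intro card_le_pattern_class[OF _ n])
      (auto intro!: boundary_swap_avoiders simp: arrange_def)
  moreover have "card {p \<in> A \<times> B. swap_safe n (2 * last (snd p) - 1) (2 * hd (fst p))}
      \<le> card (pattern_class n 4)"
    using AB pair by (intro card_le_pattern_class[OF _ n])
      (auto intro!: boundary_swap_avoiders simp: arrange_def)
  moreover have "card C \<le> card (pattern_class n 0)"
    using C finite_avoiders unfolding pattern_class_def by (intro card_mono) auto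
  moreover have "M n = card (pattern_class n 0) + card (pattern_class n 1)
      + card (pattern_class n 2) + card (pattern_class n 3) + card (pattern_class n 4)"
    unfolding M_eq_sum_pattern_classes by (simp add: atLeast0_atMost_Suc eval_nat_numeral)
  ultimately show ?thesis unfolding card_cartesian_product by linarith
qed

lemma M_doubling: "4 \<le> n \<Longrightarrow> 2 * M (n div 2) * M (n - n div 2) \<le> M n"
  using M_lower_bound[of n "avoiders (n div 2)" "avoiders (n - n div 2)" "{}"]
  by (simp add: M_eq_card_avoiders)

text \<open>While scanning, \<open>P\<close> holds
  the entries seen so far and \<open>F\<close> the values forbidden from now on: the entries seen so far and
  the completions \<open>2x - p\<close> of progressions whose first two terms \<open>p, x\<close> have appeared.\<close>
fun ap_check :: "nat list \<Rightarrow> nat list \<Rightarrow> nat list \<Rightarrow> bool" where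
  "ap_check F P [] = True"
| "ap_check F P (x # xs) = (x \<notin> set F \<and> ap_check (x # map (\<lambda>p. 2 * x - p) P @ F) (x # P) xs)"

lemma ap_check_forbidden: "ap_check F P xs \<Longrightarrow> y \<in> set xs \<Longrightarrow> y \<notin> set F"
  by (induction F P xs rule: ap_check.induct) auto

lemma ap_check_later:
  "ap_check F P xs \<Longrightarrow> j < k \<Longrightarrow> k < length xs \<Longrightarrow>
     xs ! k \<noteq> xs ! j \<and> (\<forall>p \<in> set P \<union> set (take j xs). xs ! k \<noteq> 2 * (xs ! j) - p)"
proof (induction F P xs arbitrary: j k rule: ap_check.induct)
  case (1 F P)
  then show ?case by simp
next
  case (2 F P x xs)
  have rest: "ap_check (x # map (\<lambda>p. 2 * x - p) P @ F) (x # P) xs" using 2(2) by simp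
  obtain k' where k: "k = Suc k'" "k' < length xs" using 2(3,4) by (cases k) auto
  show ?case
  proof (cases j)
    case 0
    have "xs ! k' \<notin> set (x # map (\<lambda>p. 2 * x - p) P @ F)"
      using ap_check_forbidden[OF rest] k by simp
    thus ?thesis using 0 k by auto
  next
    case (Suc j')
    from 2(1)[OF rest, of j' k'] show ?thesis using Suc k 2(3) by auto
  qed
qed

lemma ap_check_sound:
  assumes "ap_check [] [] t"
  shows "distinct t" "\<not> has_3AP t"
proof -
  show "distinct t" unfolding distinct_conv_nth
    using ap_check_later[OF assms] by (metis linorder_neqE_nat)
  show "\<not> has_3AP t"
  proof
    assume "has_3AP t"
    then obtain i j k where ijk: "i < j" "j < k" "k < length t"
      "int (t ! j) - int (t ! i) = int (t ! k) - int (t ! j)"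
      unfolding has_3AP_def by auto
    have "t ! i \<in> set (take j t)" using ijk by (auto simp: in_set_conv_nth)
    hence "t ! k \<noteq> 2 * (t ! j) - t ! i" using ap_check_later[OF assms ijk(2,3)] by auto
    moreover have "t ! i \<le> 2 * t ! j" using ijk(4) by linarith
    ultimately show False using ijk(4) by linarith
  qed
qed

definition avoider_cert :: "nat \<Rightarrow> nat list \<Rightarrow> bool" where
  "avoider_cert m t \<longleftrightarrow> length t = m \<and> set t \<subseteq> {1..m} \<and> ap_check [] [] t"

lemma avoider_cert_sound:
  assumes "avoider_cert m t"
  shows "t \<in> avoiders m"
proof -
  have "distinct t" "\<not> has_3AP t" using ap_check_sound assms unfolding avoider_cert_def by auto
  moreover have "set t = {1..m}"
    using assms distinct_card[OF \<open>distinct t\<close>] unfolding avoider_cert_def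
    by (intro card_subset_eq) auto
  ultimately show ?thesis unfolding avoiders_def perms_of_def by auto
qed

text \<open>Number of pairs \<open>(x, y)\<close> with \<open>x\<close> from \<open>xs\<close>, \<open>y\<close> from \<open>ys\<close> (counted with multiplicity) and
  \<open>Q x y\<close>, for entries in \<open>{1..m}\<close>; it is computed from the two histograms, so that evaluating
  it costs \<open>m\<^sup>2\<close> tests of \<open>Q\<close> rather than \<open>length xs * length ys\<close>.\<close>
definition pair_count :: "nat \<Rightarrow> (nat \<Rightarrow> nat \<Rightarrow> bool) \<Rightarrow> nat list \<Rightarrow> nat list \<Rightarrow> nat" where
  "pair_count m Q xs ys = (\<Sum>v\<leftarrow>[1..<m+1]. \<Sum>w\<leftarrow>[1..<m+1].
     if Q v w then count_list xs v * count_list ys w else 0)"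

lemma sum_by_values:
  fixes h :: "'b \<Rightarrow> nat"
  assumes "finite A" "finite W" "f ` A \<subseteq> W"
  shows "(\<Sum>a\<in>A. h (f a)) = (\<Sum>w\<in>W. card {a \<in> A. f a = w} * h w)"
proof -
  have "(\<Sum>a\<in>{a \<in> A. f a = w}. h (f a)) = card {a \<in> A. f a = w} * h w" for w
    using sum.cong[of "{a \<in> A. f a = w}" _ "\<lambda>a. h (f a)" "\<lambda>_. h w"] by simp
  thus ?thesis using sum.group[OF assms, of "\<lambda>a. h (f a)"] by simp
qed

lemma card_pairs_eq_pair_count:
  assumes "distinct xs" "distinct ys" "f ` set xs \<subseteq> {1..m}" "g ` set ys \<subseteq> {1..m}"
  shows "card {p \<in> set xs \<times> set ys. Q (f (fst p)) (g (snd p))} = pair_count m Q (map f xs) (map g ys)"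
proof -
  let ?W = "{1..m}" and ?ind = "\<lambda>v w. if Q v w then 1 else 0 :: nat"
  have count: "card {a \<in> set zs. k a = v} = count_list (map k zs) v" if "distinct zs" for zs k v
  proof -
    have "count_list (map k zs) v = length (filter (\<lambda>a. k a = v) zs)" by (induction zs) auto
    thus ?thesis using distinct_length_filter[OF that, of "\<lambda>a. k a = v"]
      by (simp add: Collect_conj_eq Int_commute)
  qed
  have "card {p \<in> set xs \<times> set ys. Q (f (fst p)) (g (snd p))}
      = (\<Sum>p\<in>set xs \<times> set ys. ?ind (f (fst p)) (g (snd p)))"
    by (simp flip: sum.inter_filter)
  also have "\<dots> = (\<Sum>a\<in>set xs. \<Sum>b\<in>set ys. ?ind (f a) (g b))"
    by (simp only: sum.cartesian_product split_def)
  also have "\<dots> = (\<Sum>a\<in>set xs. \<Sum>w\<in>?W. card {b \<in> set ys. g b = w} * ?ind (f a) w)"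
  proof (intro sum.cong refl)
    fix a
    show "(\<Sum>b\<in>set ys. ?ind (f a) (g b)) = (\<Sum>w\<in>?W. card {b \<in> set ys. g b = w} * ?ind (f a) w)"
      using sum_by_values[OF _ _ assms(4), of "?ind (f a)"] by simp
  qed
  also have "\<dots> = (\<Sum>v\<in>?W. card {a \<in> set xs. f a = v}
      * (\<Sum>w\<in>?W. card {b \<in> set ys. g b = w} * ?ind v w))"
    using sum_by_values[OF _ _ assms(3), of "\<lambda>v. \<Sum>w\<in>?W. card {b \<in> set ys. g b = w} * ?ind v w"]
    by simp
  also have "\<dots> = pair_count m Q (map f xs) (map g ys)"
  proof -
    have "set [1..<m+1] = ?W" by auto
    thus ?thesis unfolding pair_count_def sum_list_distinct_conv_sum_set[OF distinct_upt]
      by (simp only: sum_distrib_left) (intro sum.cong refl, simp add: count assms(1,2))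
  qed
  finally show ?thesis .
qed

lemma M_lower_bound_certified:
  assumes n: "4 \<le> n" "a = n div 2" "b = n - n div 2"
    and La: "list_all (avoider_cert a) La" "distinct La"
    and Lb: "list_all (avoider_cert b) Lb" "distinct Lb"
    and Lc: "list_all (avoider_cert n) Lc" "distinct Lc" "list_all (\<lambda>t. parity_pattern t = 0) Lc"
    and K: "K \<le> 2 * length La * length Lb
      + pair_count b (\<lambda>v w. swap_safe n (2 * v) (2 * w - 1)) (map last La) (map hd Lb)
      + pair_count b (\<lambda>v w. swap_safe n (2 * w - 1) (2 * v)) (map hd La) (map last Lb)
      + length Lc"
  shows "K \<le> M n"
proof -
  have A: "set La \<subseteq> avoiders (n div 2)" and B: "set Lb \<subseteq> avoiders (n - n div 2)"
    and C: "set Lc \<subseteq> pattern_class n 0"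
    using La Lb Lc avoider_cert_sound n unfolding pattern_class_def by (auto simp: list_all_iff)
  have "last t \<in> {1..b} \<and> hd t \<in> {1..b}" if "t \<in> set La \<union> set Lb" for t
  proof -
    have "t \<noteq> []" "set t \<subseteq> {1..b}" using that A B avoidersD(2,3) n by fastforce+
    thus ?thesis using last_in_set hd_in_set by blast
  qed
  hence ends: "last ` set La \<subseteq> {1..b}" "hd ` set Lb \<subseteq> {1..b}"
    "hd ` set La \<subseteq> {1..b}" "last ` set Lb \<subseteq> {1..b}" by auto
  have "card {p \<in> set La \<times> set Lb. swap_safe n (2 * last (fst p)) (2 * hd (snd p) - 1)}
      = pair_count b (\<lambda>v w. swap_safe n (2 * v) (2 * w - 1)) (map last La) (map hd Lb)"
    using card_pairs_eq_pair_count[OF La(2) Lb(2) ends(1,2), where Q = "\<lambda>v w. swap_safe n (2 * v) (2 * w - 1)"]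
    by simp
  moreover have "card {p \<in> set La \<times> set Lb. swap_safe n (2 * last (snd p) - 1) (2 * hd (fst p))}
      = pair_count b (\<lambda>v w. swap_safe n (2 * w - 1) (2 * v)) (map hd La) (map last Lb)"
    using card_pairs_eq_pair_count[OF La(2) Lb(2) ends(3,4), where Q = "\<lambda>v w. swap_safe n (2 * w - 1) (2 * v)"]
    by simp
  ultimately show ?thesis
    using M_lower_bound[OF n(1) A B C] K La(2) Lb(2) Lc(2) by (simp add: distinct_card)
qed


definition avoiders_list_4 :: "nat list list" where
  "avoiders_list_4 = [[1,3,2,4],
  [1,3,4,2],
  [2,1,4,3],
  [2,4,1,3],
  [2,4,3,1],
  [3,1,2,4],
  [3,1,4,2],
  [3,4,1,2],
  [4,2,1,3],
  [4,2,3,1]]"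

definition avoiders_list_5 :: "nat list list" where
  "avoiders_list_5 = [[1,5,3,2,4],
  [1,5,3,4,2],
  [2,1,4,5,3],
  [2,4,1,5,3],
  [2,4,3,1,5],
  [2,4,3,5,1],
  [2,4,5,1,3],
  [3,1,2,5,4],
  [3,1,5,2,4],
  [3,1,5,4,2],
  [3,5,1,2,4],
  [3,5,1,4,2],
  [3,5,4,1,2],
  [4,2,1,5,3],
  [4,2,3,1,5],
  [4,2,3,5,1],
  [4,2,5,1,3],
  [4,5,2,1,3],
  [5,1,3,2,4],
  [5,1,3,4,2]]"

definition avoiders_list_6 :: "nat list list" where
  "avoiders_list_6 = [[1,5,3,2,6,4],
  [1,5,3,4,2,6],
  [1,5,3,4,6,2],
  [1,5,3,6,2,4],
  [1,5,6,3,2,4],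
  [2,1,6,4,5,3],
  [2,6,1,4,5,3],
  [2,6,4,1,5,3],
  [2,6,4,3,1,5],
  [2,6,4,3,5,1],
  [2,6,4,5,1,3],
  [3,1,2,5,6,4],
  [3,1,5,2,6,4],
  [3,1,5,4,2,6],
  [3,1,5,4,6,2],
  [3,1,5,6,2,4],
  [3,5,1,2,6,4],
  [3,5,1,4,2,6],
  [3,5,1,4,6,2],
  [3,5,1,6,2,4],
  [3,5,4,1,2,6],
  [3,5,4,1,6,2],
  [3,5,4,6,1,2],
  [3,5,6,1,2,4],
  [4,2,1,6,5,3],
  [4,2,3,1,6,5],
  [4,2,3,6,1,5],
  [4,2,3,6,5,1],
  [4,2,6,1,5,3],
  [4,2,6,3,1,5],
  [4,2,6,3,5,1],
  [4,2,6,5,1,3],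
  [4,6,2,1,5,3],
  [4,6,2,3,1,5],
  [4,6,2,3,5,1],
  [4,6,2,5,1,3],
  [4,6,5,2,1,3],
  [5,1,3,2,6,4],
  [5,1,3,4,2,6],
  [5,1,3,4,6,2],
  [5,1,3,6,2,4],
  [5,1,6,3,2,4],
  [5,6,1,3,2,4],
  [6,2,1,4,5,3],
  [6,2,4,1,5,3],
  [6,2,4,3,1,5],
  [6,2,4,3,5,1],
  [6,2,4,5,1,3]]"

definition avoiders_list_7 :: "nat list list" where
  "avoiders_list_7 = [[1,5,3,2,7,6,4],
  [1,5,3,7,2,6,4],
  [1,5,3,7,4,2,6],
  [1,5,3,7,4,6,2],
  [1,5,3,7,6,2,4],
  [1,5,7,3,2,6,4],
  [1,5,7,3,4,2,6],
  [1,5,7,3,4,6,2],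
  [1,5,7,3,6,2,4],
  [1,5,7,6,3,2,4],
  [2,6,4,1,5,3,7],
  [2,6,4,1,5,7,3],
  [2,6,4,3,1,7,5],
  [2,6,4,3,7,1,5],
  [2,6,4,3,7,5,1],
  [2,6,4,5,1,3,7],
  [2,6,4,5,1,7,3],
  [2,6,4,5,7,1,3],
  [2,6,4,7,3,1,5],
  [2,6,4,7,3,5,1],
  [3,1,2,7,5,6,4],
  [3,1,7,2,5,6,4],
  [3,1,7,5,2,6,4],
  [3,1,7,5,4,2,6],
  [3,1,7,5,4,6,2],
  [3,1,7,5,6,2,4],
  [3,7,1,2,5,6,4],
  [3,7,1,5,2,6,4],
  [3,7,1,5,4,2,6],
  [3,7,1,5,4,6,2],
  [3,7,1,5,6,2,4],
  [3,7,5,1,2,6,4],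
  [3,7,5,1,4,2,6],
  [3,7,5,1,4,6,2],
  [3,7,5,1,6,2,4],
  [3,7,5,6,1,2,4],
  [4,2,1,6,5,3,7],
  [4,2,1,6,5,7,3],
  [4,2,3,1,6,7,5],
  [4,2,3,6,1,7,5],
  [4,2,3,6,7,1,5],
  [4,2,3,6,7,5,1],
  [4,2,6,1,5,3,7],
  [4,2,6,1,5,7,3],
  [4,2,6,3,1,7,5],
  [4,2,6,3,7,1,5],
  [4,2,6,3,7,5,1],
  [4,2,6,5,1,3,7],
  [4,2,6,5,1,7,3],
  [4,2,6,5,7,1,3],
  [4,2,6,7,3,1,5],
  [4,2,6,7,3,5,1],
  [4,6,2,1,5,3,7],
  [4,6,2,1,5,7,3],
  [4,6,2,3,1,7,5],
  [4,6,2,3,7,1,5],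
  [4,6,2,3,7,5,1],
  [4,6,2,5,1,3,7],
  [4,6,2,5,1,7,3],
  [4,6,2,5,7,1,3],
  [4,6,2,7,3,1,5],
  [4,6,2,7,3,5,1],
  [4,6,5,2,1,3,7],
  [4,6,5,2,1,7,3],
  [4,6,5,2,7,1,3],
  [4,6,5,7,2,1,3],
  [4,6,7,2,3,1,5],
  [4,6,7,2,3,5,1],
  [5,1,3,2,7,6,4],
  [5,1,3,7,2,6,4],
  [5,1,3,7,4,2,6],
  [5,1,3,7,4,6,2],
  [5,1,3,7,6,2,4],
  [5,1,7,3,2,6,4],
  [5,1,7,3,4,2,6],
  [5,1,7,3,4,6,2],
  [5,1,7,3,6,2,4],
  [5,1,7,6,3,2,4],
  [5,7,1,3,2,6,4],
  [5,7,1,3,4,2,6],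
  [5,7,1,3,4,6,2],
  [5,7,1,3,6,2,4],
  [5,7,1,6,3,2,4],
  [5,7,6,1,3,2,4],
  [6,2,4,1,5,3,7],
  [6,2,4,1,5,7,3],
  [6,2,4,3,1,7,5],
  [6,2,4,3,7,1,5],
  [6,2,4,3,7,5,1],
  [6,2,4,5,1,3,7],
  [6,2,4,5,1,7,3],
  [6,2,4,5,7,1,3],
  [6,2,4,7,3,1,5],
  [6,2,4,7,3,5,1],
  [7,3,1,2,5,6,4],
  [7,3,1,5,2,6,4],
  [7,3,1,5,4,2,6],
  [7,3,1,5,4,6,2],
  [7,3,1,5,6,2,4],
  [7,3,5,1,2,6,4],
  [7,3,5,1,4,2,6],
  [7,3,5,1,4,6,2],
  [7,3,5,1,6,2,4],
  [7,3,5,6,1,2,4]]"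

definition pattern0_list_9 :: "nat list list" where
  "pattern0_list_9 = [[2,6,4,3,1,8,7,9,5],
  [3,7,5,1,4,2,9,8,6],
  [3,7,5,9,6,8,1,2,4],
  [4,2,1,8,6,9,5,3,7],
  [4,2,1,8,6,9,5,7,3],
  [4,8,6,7,9,2,3,1,5],
  [5,1,3,2,9,7,6,4,8],
  [5,1,3,2,9,7,6,8,4],
  [5,9,7,8,1,3,4,2,6],
  [5,9,7,8,1,3,4,6,2],
  [6,2,4,3,1,8,7,9,5],
  [6,8,9,2,4,1,5,3,7],
  [6,8,9,2,4,1,5,7,3],
  [7,3,5,1,4,2,9,8,6],
  [7,3,5,9,6,8,1,2,4],
  [8,4,6,7,9,2,3,1,5]]"

definition pattern0_list_10 :: "nat list list" where
  "pattern0_list_10 = [[1,9,5,7,8,10,3,4,2,6],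
  [2,10,6,4,3,1,8,7,9,5],
  [3,7,5,1,4,2,9,8,10,6],
  [3,7,5,9,6,10,1,2,4,8],
  [3,7,5,9,6,10,1,2,8,4],
  [3,7,5,9,6,10,1,8,2,4],
  [3,7,5,9,6,10,8,1,2,4],
  [3,7,5,9,8,10,1,4,2,6],
  [3,7,9,10,1,5,2,6,4,8],
  [3,7,9,10,1,5,2,6,8,4],
  [4,2,1,8,10,6,9,5,3,7],
  [4,2,1,8,10,6,9,5,7,3],
  [4,2,8,1,10,6,9,5,3,7],
  [4,2,8,1,10,6,9,5,7,3],
  [4,8,2,1,10,6,9,5,3,7],
  [4,8,2,1,10,6,9,5,7,3],
  [4,8,6,2,3,1,10,7,9,5],
  [4,8,6,2,5,1,3,10,9,7],
  [4,8,6,2,5,1,10,3,9,7],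
  [4,8,6,2,5,1,10,9,3,7],
  [4,8,6,2,5,1,10,9,7,3],
  [4,8,6,10,7,9,2,3,1,5],
  [5,1,3,2,9,7,10,6,4,8],
  [5,1,3,2,9,7,10,6,8,4],
  [5,1,9,7,8,10,3,4,2,6],
  [5,9,1,7,8,10,3,4,2,6],
  [5,9,7,1,8,10,3,4,2,6],
  [5,9,7,8,1,3,4,2,10,6],
  [5,9,7,8,1,3,4,6,2,10],
  [5,9,7,8,1,3,4,6,10,2],
  [5,9,7,8,1,3,4,10,2,6],
  [5,9,7,8,1,3,10,4,2,6],
  [5,9,7,8,1,10,3,4,2,6],
  [5,9,7,8,10,1,3,4,2,6],
  [5,9,7,10,1,3,2,6,4,8],
  [5,9,7,10,1,3,2,6,8,4],
  [6,2,4,1,10,8,9,5,3,7],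
  [6,2,4,1,10,8,9,5,7,3],
  [6,2,4,3,1,10,8,7,9,5],
  [6,2,4,3,10,1,8,7,9,5],
  [6,2,4,3,10,8,1,7,9,5],
  [6,2,4,3,10,8,7,1,9,5],
  [6,2,4,3,10,8,7,5,1,9],
  [6,2,4,3,10,8,7,5,9,1],
  [6,2,4,3,10,8,7,9,1,5],
  [6,2,4,10,3,1,8,7,9,5],
  [6,2,10,4,3,1,8,7,9,5],
  [6,10,2,4,3,1,8,7,9,5],
  [6,10,8,9,2,4,1,5,3,7],
  [6,10,8,9,2,4,1,5,7,3],
  [7,3,5,1,4,2,9,8,10,6],
  [7,3,5,9,6,10,1,2,4,8],
  [7,3,5,9,6,10,1,2,8,4],
  [7,3,5,9,6,10,1,8,2,4],
  [7,3,5,9,6,10,8,1,2,4],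
  [7,3,5,9,8,10,1,4,2,6],
  [7,3,9,10,1,5,2,6,4,8],
  [7,3,9,10,1,5,2,6,8,4],
  [7,9,3,10,1,5,2,6,4,8],
  [7,9,3,10,1,5,2,6,8,4],
  [7,9,10,3,1,5,2,6,4,8],
  [7,9,10,3,1,5,2,6,8,4],
  [8,4,2,1,10,6,9,5,3,7],
  [8,4,2,1,10,6,9,5,7,3],
  [8,4,6,2,3,1,10,7,9,5],
  [8,4,6,2,5,1,3,10,9,7],
  [8,4,6,2,5,1,10,3,9,7],
  [8,4,6,2,5,1,10,9,3,7],
  [8,4,6,2,5,1,10,9,7,3],
  [8,4,6,10,7,9,2,3,1,5],
  [9,1,5,7,8,10,3,4,2,6],
  [10,2,6,4,3,1,8,7,9,5]]"


lemma avoiders_list_4_cert: "list_all (avoider_cert 4) avoiders_list_4" "distinct avoiders_list_4"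
  by (simp_all add: avoiders_list_4_def avoider_cert_def)

lemma avoiders_list_5_cert: "list_all (avoider_cert 5) avoiders_list_5" "distinct avoiders_list_5"
  by (simp_all add: avoiders_list_5_def avoider_cert_def)

lemma avoiders_list_6_cert: "list_all (avoider_cert 6) avoiders_list_6" "distinct avoiders_list_6"
  by (simp_all add: avoiders_list_6_def avoider_cert_def)

lemma avoiders_list_7_cert: "list_all (avoider_cert 7) avoiders_list_7" "distinct avoiders_list_7"
  by (simp_all add: avoiders_list_7_def avoider_cert_def)

lemma pattern0_list_9_cert:
  "list_all (avoider_cert 9) pattern0_list_9" "distinct pattern0_list_9"
  "list_all (\<lambda>t. parity_pattern t = 0) pattern0_list_9"
  by (simp_all add: pattern0_list_9_def avoider_cert_def parity_pattern_def arrange_def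
      boundary_swap_def)

lemma pattern0_list_10_cert:
  "list_all (avoider_cert 10) pattern0_list_10" "distinct pattern0_list_10"
  "list_all (\<lambda>t. parity_pattern t = 0) pattern0_list_10"
  by (simp_all add: pattern0_list_10_def avoider_cert_def parity_pattern_def arrange_def
      boundary_swap_def)

lemma M_7: "104 \<le> M 7"
proof -
  have "card (set avoiders_list_7) \<le> card (avoiders 7)"
    using avoiders_list_7_cert(1) avoider_cert_sound finite_avoiders
    by (intro card_mono) (auto simp: list_all_iff)
  thus ?thesis using distinct_card[OF avoiders_list_7_cert(2)]
    by (simp add: M_eq_card_avoiders avoiders_list_7_def)
qed

lemma M_8: "258 \<le> M 8"
  by (rule M_lower_bound_certified[OF _ _ _ avoiders_list_4_cert avoiders_list_4_cert, where Lc = "[]"])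
    (simp_all add: avoiders_list_4_def pair_count_def swap_safe_def upt_conv_Cons)

lemma M_9: "496 \<le> M 9"
  by (rule M_lower_bound_certified[OF _ _ _ avoiders_list_4_cert avoiders_list_5_cert
        pattern0_list_9_cert])
    (simp_all add: avoiders_list_4_def avoiders_list_5_def pattern0_list_9_def pair_count_def
      swap_safe_def upt_conv_Cons)

lemma M_10: "1066 \<le> M 10"
  by (rule M_lower_bound_certified[OF _ _ _ avoiders_list_5_cert avoiders_list_5_cert
        pattern0_list_10_cert])
    (simp_all add: avoiders_list_5_def pattern0_list_10_def pair_count_def swap_safe_def upt_conv_Cons)

lemma M_11: "2332 \<le> M 11"
  by (rule M_lower_bound_certified[OF _ _ _ avoiders_list_5_cert avoiders_list_6_cert, where Lc = "[]"])
    (simp_all add: avoiders_list_5_def avoiders_list_6_def pair_count_def swap_safe_def upt_conv_Cons)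

lemma M_12: "5664 \<le> M 12"
  by (rule M_lower_bound_certified[OF _ _ _ avoiders_list_6_cert avoiders_list_6_cert, where Lc = "[]"])
    (simp_all add: avoiders_list_6_def pair_count_def swap_safe_def upt_conv_Cons)

lemma M_13: "12088 \<le> M 13"
  by (rule M_lower_bound_certified[OF _ _ _ avoiders_list_6_cert avoiders_list_7_cert, where Lc = "[]"])
    (simp_all add: avoiders_list_6_def avoiders_list_7_def pair_count_def swap_safe_def upt_conv_Cons)

lemma M_14: "26944 \<le> M 14"
  by (rule M_lower_bound_certified[OF _ _ _ avoiders_list_7_cert avoiders_list_7_cert, where Lc = "[]"])
    (simp_all add: avoiders_list_7_def pair_count_def swap_safe_def upt_conv_Cons)

lemma M_15: "53664 \<le> M 15"
proof -
  have "2 * 104 * 258 \<le> 2 * M 7 * M 8" using M_7 M_8 by (intro mult_mono) auto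
  thus ?thesis using M_doubling[of 15] by simp
qed

lemma halving_lower_bound:
  fixes f :: "nat \<Rightarrow> real" and c :: real
  assumes "1 \<le> N" "0 \<le> c"
    and doubling: "\<And>n. 2 * N \<le> n \<Longrightarrow> 2 * f (n div 2) * f (n - n div 2) \<le> f n"
    and base: "\<And>n. N \<le> n \<Longrightarrow> n < 2 * N \<Longrightarrow> c ^ n / 2 \<le> f n"
  shows "N \<le> n \<Longrightarrow> c ^ n / 2 \<le> f n"
proof (induction n rule: less_induct)
  case (less n)
  show ?case
  proof (cases "n < 2 * N")
    case True
    thus ?thesis using base less.prems by simp
  next
    case False
    let ?a = "n div 2" and ?b = "n - n div 2"
    have halves: "N \<le> ?a" "?a < n" "N \<le> ?b" "?b < n" using False \<open>1 \<le> N\<close> by auto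
    have "c ^ n / 2 = 2 * (c ^ ?a / 2) * (c ^ ?b / 2)"
      by (simp flip: power_add)
    also have "\<dots> \<le> 2 * f ?a * f ?b"
    proof -
      have "c ^ ?a / 2 \<le> f ?a" "c ^ ?b / 2 \<le> f ?b" using less.IH halves by auto
      moreover have "0 \<le> c ^ ?a / 2" "0 \<le> c ^ ?b / 2" using \<open>0 \<le> c\<close> by auto
      ultimately show ?thesis by (intro mult_mono mult_left_mono) auto
    qed
    also have "\<dots> \<le> f n" using doubling False by simp
    finally show ?thesis .
  qed
qed

lemma root_power_le:
  fixes b x :: real
  assumes "0 \<le> b" "0 \<le> x" "0 < k" "b ^ n \<le> x ^ k"
  shows "(b powr (1 / k)) ^ n \<le> x"
proof -
  have "(b powr (1 / k)) ^ k = b"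
    using assms by (simp add: powr_realpow' [symmetric] powr_powr)
  hence "((b powr (1 / k)) ^ n) ^ k = b ^ n" by (metis mult.commute power_mult)
  thus ?thesis using assms power_mono_iff[of "(b powr (1 / k)) ^ n" x k] by simp
qed

lemma M_bound_from_count:
  assumes "(2132::nat) ^ n \<le> (2 * K) ^ 10" "K \<le> M n"
  shows "(2132 powr (1 / 10)) ^ n / 2 \<le> real (M n)"
proof -
  have "(2 * K) ^ 10 \<le> (2 * M n) ^ 10" using assms(2) by (intro power_mono) auto
  hence "(2132::nat) ^ n \<le> (2 * M n) ^ 10" using assms(1) by linarith
  hence "real (2132 ^ n) \<le> real ((2 * M n) ^ 10)" by (simp only: of_nat_le_iff)
  hence "(2132::real) ^ n \<le> (2 * real (M n)) ^ 10" by simp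
  hence "(2132 powr (1 / real (10::nat))) ^ n \<le> 2 * real (M n)"
    by (intro root_power_le) auto
  thus ?thesis by simp
qed

lemma M_base_range:
  assumes "8 \<le> n" "n < 16"
  shows "(2132 powr (1 / 10)) ^ n / 2 \<le> real (M n)"
proof -
  consider "n = 8" | "n = 9" | "n = 10" | "n = 11" | "n = 12" | "n = 13" | "n = 14" | "n = 15"
    using assms by linarith
  thus ?thesis
  proof cases
    case 1 show ?thesis unfolding 1 by (rule M_bound_from_count[OF _ M_8]) simp
  next
    case 2 show ?thesis unfolding 2 by (rule M_bound_from_count[OF _ M_9]) simp
  next
    case 3 show ?thesis unfolding 3 by (rule M_bound_from_count[OF _ M_10]) simp
  next
    case 4 show ?thesis unfolding 4 by (rule M_bound_from_count[OF _ M_11]) simp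
  next
    case 5 show ?thesis unfolding 5 by (rule M_bound_from_count[OF _ M_12]) simp
  next
    case 6 show ?thesis unfolding 6 by (rule M_bound_from_count[OF _ M_13]) simp
  next
    case 7 show ?thesis unfolding 7 by (rule M_bound_from_count[OF _ M_14]) simp
  next
    case 8 show ?thesis unfolding 8 by (rule M_bound_from_count[OF _ M_15]) simp
  qed
qed

theorem theorem1:
  fixes n :: nat
  assumes "n \<ge> 8"
  shows "real (M n) \<ge> (1/2) * (2132 powr (1/10)) ^ n"
proof -
  have "(2132 powr (1 / 10)) ^ n / 2 \<le> real (M n)"
  proof (rule halving_lower_bound[where N = 8])
    fix m :: nat
    assume "2 * 8 \<le> m"
    hence "2 * M (m div 2) * M (m - m div 2) \<le> M m" using M_doubling by simp
    hence "real (2 * M (m div 2) * M (m - m div 2)) \<le> real (M m)" by (simp only: of_nat_le_iff)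
    thus "2 * real (M (m div 2)) * real (M (m - m div 2)) \<le> real (M m)" by simp
  next
    fix m :: nat
    assume "8 \<le> m" "m < 2 * 8"
    thus "(2132 powr (1 / 10)) ^ m / 2 \<le> real (M m)" using M_base_range by simp
  qed (use assms in auto)
  thus ?thesis by linarith
qed

end
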